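(* Let $p$ be a prime, $z=cE_4$ a scalar matrix with $c\in\mathbb Q^\times$, and for a function $h$ on $G(\mathbb Q_p)$ put $$J_G(zu_{\min},h)=(1-p^{-1})^{-1}\int_{\mathbb Q_p}\int_{K_p}h(zk^{-1}u_{\min}(x)k)\,|x|_p\,dk\,dx.$$ Let $a_3\ge a_1\ge a_2\ge0$ and $h=h_{a_1,a_2,a_3}$. If $a_3$ is odd then $J_G(zu_{\min},h)=0$. If $a_3=2m$ is even, write the double coset so that $m\ge a_1\ge a_2\ge 0$ (possible by the Weyl group action); then $$J_G(zu_{\min},h_{a_1,a_2,a_3})=\begin{cases}(1-p^{-2})^{-1}&\text{if }a_1=a_2=m\text{ and }|c|_p=p^m,\\ p^{a_3-2a_2}&\text{if }m=a_1>a_2\text{ and }|c|_p=p^m,\\ 0&\text{otherwise.}\end{cases}$$ Moreover, if $h_p$ is the characteristic function of $\{x\in K_p: x\equiv E_4\bmod p^l\mathbb Z_p\}$ ($l\ge1$), then $J_G(zu_{\min},h_p)=p^{-2l}(1-p^{-2})^{-1}$ if $c\equiv1\bmod p^l\mathbb Z_p$ and $0$ otherwise.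
   Context: $G=GSp_4$, $K_p=G(\mathbb Z_p)$ with Haar measure $dk$ of total mass 1, $dx$ the Haar measure on $\mathbb Q_p$ with ${\rm vol}(\mathbb Z_p)=1$. $u_{\min}(x)$ is the unipotent matrix $E_4+xe_{13}$ (identity with $x$ in position $(1,3)$). $h_{a_1,a_2,a_3}$ is the characteristic function of $K_p\,{\rm diag}(p^{-a_1},p^{-a_2},p^{a_1-a_3},p^{a_2-a_3})K_p$. *)

theory Defs
  imports "HOL-Analysis.Analysis" "HOL-Probability.Probability"
          "HOL-Computational_Algebra.Primes"
begin

definition padic_val_rat :: "nat \<Rightarrow> rat \<Rightarrow> int" where
  "padic_val_rat p q = (case quotient_of q of (a, b) \<Rightarrow>
      int (multiplicity (int p) a) - int (multiplicity (int p) b))"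

definition padic_abs_rat :: "nat \<Rightarrow> rat \<Rightarrow> real" where
  "padic_abs_rat p q = (if q = 0 then 0 else real p powr (- real_of_int (padic_val_rat p q)))"

text \<open>This is the defining universal
  description of the completion of Q at p (unique up to unique isometric isomorphism).\<close>

definition is_Qp :: "nat \<Rightarrow> ('a::field_char_0 \<Rightarrow> real) \<Rightarrow> bool" where
  "is_Qp p absv \<longleftrightarrow>
     (\<forall>x. absv x \<ge> 0) \<and> (\<forall>x. absv x = 0 \<longleftrightarrow> x = 0) \<and>
     (\<forall>x y. absv (x * y) = absv x * absv y) \<and>
     (\<forall>x y. absv (x + y) \<le> max (absv x) (absv y)) \<and>
     (\<forall>q. absv (of_rat q) = padic_abs_rat p q) \<and>
     (\<forall>X :: nat \<Rightarrow> 'a. (\<forall>e>0. \<exists>N. \<forall>m\<ge>N. \<forall>n\<ge>N. absv (X m - X n) < e) \<longrightarrow>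
         (\<exists>L. \<forall>e>0. \<exists>N. \<forall>n\<ge>N. absv (X n - L) < e)) \<and>
     (\<forall>x. \<forall>e>0. \<exists>q. absv (x - of_rat q) < e)"

text \<open>Closed balls of Q_p; they generate the Borel sigma algebra of Q_p.\<close>
definition Qp_balls :: "nat \<Rightarrow> ('a::field_char_0 \<Rightarrow> real) \<Rightarrow> 'a set set" where
  "Qp_balls p absv = {{y. absv (y - x) \<le> real p powr (- real_of_int n)} | x n. True}"

definition haar_Qp :: "nat \<Rightarrow> ('a::field_char_0 \<Rightarrow> real) \<Rightarrow> 'a measure \<Rightarrow> bool" where
  "haar_Qp p absv dx \<longleftrightarrow>
     space dx = UNIV \<and> sets dx = sigma_sets UNIV (Qp_balls p absv) \<and>
     (\<forall>t. \<forall>A\<in>sets dx. emeasure dx ((\<lambda>y. t + y) ` A) = emeasure dx A) \<and>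
     emeasure dx {y. absv y \<le> 1} = 1"

type_synonym 'a mat4 = "'a ^ 4 ^ 4"

text \<open>Indices 1,2,3,4 of the paper correspond to (0::4),(1::4),(2::4),(3::4).\<close>
definition Jmat :: "'a::comm_ring_1 mat4" where
  "Jmat = (\<chi> i j. if (i = 0 \<and> j = 2) \<or> (i = 1 \<and> j = 3) then 1
                  else if (i = 2 \<and> j = 0) \<or> (i = 3 \<and> j = 1) then -1 else 0)"

definition GSp4 :: "'a::field set \<Rightarrow> 'a mat4 set" where
  "GSp4 R = {g. (\<forall>i j. g $ i $ j \<in> R) \<and>
      (\<exists>\<mu>. \<mu> \<noteq> 0 \<and> \<mu> \<in> R \<and> inverse \<mu> \<in> R \<and> transpose g ** Jmat ** g = mat \<mu> ** Jmat)}"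

definition GQp :: "('a::field_char_0 \<Rightarrow> real) \<Rightarrow> 'a mat4 set" where
  "GQp absv = GSp4 UNIV"

definition Kp :: "('a::field_char_0 \<Rightarrow> real) \<Rightarrow> 'a mat4 set" where
  "Kp absv = GSp4 {x. absv x \<le> 1}"

text \<open>Open balls (cosets of principal congruence subgroups) in K_p; they generate its
  Borel sigma algebra.\<close>
definition Kp_balls :: "nat \<Rightarrow> ('a::field_char_0 \<Rightarrow> real) \<Rightarrow> 'a mat4 set set" where
  "Kp_balls p absv = {{k \<in> Kp absv. \<forall>i j. absv (k $ i $ j - k0 $ i $ j) \<le> real p powr (- real n)}
                      | k0 n. k0 \<in> Kp absv}"

definition haar_Kp :: "nat \<Rightarrow> ('a::field_char_0 \<Rightarrow> real) \<Rightarrow> 'a mat4 measure \<Rightarrow> bool" where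
  "haar_Kp p absv dk \<longleftrightarrow>
     space dk = Kp absv \<and> sets dk = sigma_sets (Kp absv) (Kp_balls p absv) \<and>
     emeasure dk (Kp absv) = 1 \<and>
     (\<forall>g\<in>Kp absv. \<forall>A\<in>sets dk. emeasure dk ((\<lambda>k. g ** k) ` A) = emeasure dk A)"

definition u_min :: "'a::field \<Rightarrow> 'a mat4" where
  "u_min x = mat 1 + (\<chi> i j. if i = 0 \<and> j = 2 then x else 0)"

definition diag4 :: "'a::zero \<Rightarrow> 'a \<Rightarrow> 'a \<Rightarrow> 'a \<Rightarrow> 'a mat4" where
  "diag4 d1 d2 d3 d4 = (\<chi> i j. if i = j then
       (if i = 0 then d1 else if i = 1 then d2 else if i = 2 then d3 else d4) else 0)"

definition h_coset :: "nat \<Rightarrow> ('a::field_char_0 \<Rightarrow> real) \<Rightarrow> int \<Rightarrow> int \<Rightarrow> int \<Rightarrow> 'a mat4 \<Rightarrow> real" where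
  "h_coset p absv a1 a2 a3 =
     indicator {k1 ** diag4 (of_nat p powi (- a1)) (of_nat p powi (- a2))
                            (of_nat p powi (a1 - a3)) (of_nat p powi (a2 - a3)) ** k2
               | k1 k2. k1 \<in> Kp absv \<and> k2 \<in> Kp absv}"

definition h_level :: "nat \<Rightarrow> ('a::field_char_0 \<Rightarrow> real) \<Rightarrow> nat \<Rightarrow> 'a mat4 \<Rightarrow> real" where
  "h_level p absv l = indicator {k \<in> Kp absv. \<forall>i j. absv (k $ i $ j - mat 1 $ i $ j) \<le> real p powr (- real l)}"

definition J_G :: "nat \<Rightarrow> ('a::field_char_0 \<Rightarrow> real) \<Rightarrow> 'a measure \<Rightarrow> 'a mat4 measure \<Rightarrow>
                   rat \<Rightarrow> ('a mat4 \<Rightarrow> real) \<Rightarrow> ennreal" where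
  "J_G p absv dx dk c h = ennreal (inverse (1 - inverse (real p))) *
     (\<integral>\<^sup>+ x. (\<integral>\<^sup>+ k. ennreal (h (mat (of_rat c) ** matrix_inv k ** u_min x ** k) * absv x) \<partial>dk) \<partial>dx)"

end

theory Submission
  imports Defs
begin

text \<open>Both test functions are invariant under conjugation by \<open>K\<^sub>p\<close> and \<open>dk\<close> has mass 1, so
  \<open>J\<^sub>G(z u\<^sub>m\<^sub>i\<^sub>n, h) = (1 - p\<^sup>-\<^sup>1)\<^sup>-\<^sup>1 \<integral> h(c u\<^sub>m\<^sub>i\<^sub>n(x)) |x| dx\<close>.
  Whether \<open>c u\<^sub>m\<^sub>i\<^sub>n(x)\<close> lies in \<open>K\<^sub>p D K\<^sub>p\<close> is decided by three \<open>K\<^sub>p\<close>-bi-invariants: the absolute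
  value of the similitude factor (\<open>|c|\<^sup>2 = p\<^sup>a\<^sup>3\<close>, so \<open>a\<^sub>3\<close> is even), the largest entry and the largest
  \<open>2 \<times> 2\<close> minor; explicit Cartan decompositions give the converse. The admissible \<open>x\<close> thus form
  the empty set, the ball \<open>|x| \<le> 1\<close> or the sphere \<open>|x| = p\<^sup>m\<^sup>-\<^sup>a\<^sup>2\<close> (for the congruence subgroup the
  ball \<open>|x| \<le> p\<^sup>-\<^sup>l\<close>), and \<open>\<integral> |x| dx\<close> over these is a geometric series, because a ball of radius
  \<open>p\<^sup>e\<close> has measure \<open>p\<^sup>e\<close> (tile it by \<open>p\<^sup>n\<close> translates of a ball of radius \<open>p\<^sup>e\<^sup>-\<^sup>n\<close>).\<close>

section \<open>Scalar matrices, similitudes and \<open>2 \<times> 2\<close> minors\<close>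

lemma mat_matrix_mult: "(mat c ** A :: 'a::semiring_1^'n::finite^'m::finite) = (\<chi> i j. c * A $ i $ j)"
  unfolding matrix_matrix_mult_def mat_def
  by (auto simp: vec_eq_iff if_distrib if_distribR sum.delta'[OF finite] cong: if_cong)

lemma matrix_mult_mat: "(A ** mat c :: 'a::semiring_1^'n::finite^'m::finite) = (\<chi> i j. A $ i $ j * c)"
  unfolding matrix_matrix_mult_def mat_def
  by (auto simp: vec_eq_iff if_distrib if_distribR sum.delta[OF finite] cong: if_cong)

lemma mat_matrix_mult_commute: "mat c ** A = A ** (mat c :: 'a::comm_semiring_1^'n::finite^'n)"
  by (simp add: mat_matrix_mult matrix_mult_mat mult.commute)

lemma mat_mult_mat: "mat a ** mat b = (mat (a * b) :: 'a::semiring_1^'n::finite^'n)"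
  by (simp add: mat_matrix_mult vec_eq_iff) (simp add: mat_def)

lemma matrix_mult_mat_left_commute:
  "X ** (mat a ** Y) = mat a ** (X ** Y :: 'a::comm_semiring_1^'n::finite^'n)"
  by (metis mat_matrix_mult_commute matrix_mul_assoc)

lemma matrix_diff_mult: "(B - C) ** A = B ** A - C ** (A :: 'a::ring_1^'p^'n::finite)"
  by (simp add: vec_eq_iff matrix_matrix_mult_def left_diff_distrib sum_subtractf)

lemma matrix_mult_diff: "(A :: 'a::ring_1^'n::finite^'m) ** (B - C) = A ** B - A ** C"
  by (simp add: vec_eq_iff matrix_matrix_mult_def right_diff_distrib sum_subtractf)

lemma matrix_inv_unique:
  fixes A :: "'a::semiring_1^'n::finite^'m::finite"
  assumes "A ** B = mat 1" "B ** A = mat 1"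
  shows "matrix_inv A = B"
proof -
  have inv: "A ** matrix_inv A = mat 1 \<and> matrix_inv A ** A = mat 1"
    unfolding matrix_inv_def using assms by (rule someI[of _ B, OF conjI])
  have "matrix_inv A = matrix_inv A ** (A ** B)"
    by (simp add: assms(1))
  also have "\<dots> = B"
    using inv by (simp add: matrix_mul_assoc)
  finally show ?thesis .
qed

definition similitude :: "'a::comm_ring_1 mat4 \<Rightarrow> 'a \<Rightarrow> bool" where
  "similitude g \<mu> \<longleftrightarrow> transpose g ** Jmat ** g = mat \<mu> ** Jmat"

lemma similitude_factor_unique:
  assumes "similitude g a" "similitude g b"
  shows "a = b"
proof -
  have "(mat a ** Jmat) $ 0 $ 2 = (mat b ** Jmat :: 'a mat4) $ 0 $ 2"
    using assms by (simp add: similitude_def)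
  then show ?thesis
    by (simp add: mat_matrix_mult Jmat_def)
qed

lemma similitude_mult:
  assumes "similitude A a" "similitude B b"
  shows "similitude (A ** B) (a * b)"
proof -
  have "transpose (A ** B) ** Jmat ** (A ** B) = transpose B ** (transpose A ** Jmat ** A) ** B"
    by (simp add: matrix_transpose_mul matrix_mul_assoc)
  also have "\<dots> = transpose B ** (mat a ** Jmat) ** B"
    using assms(1) by (simp add: similitude_def)
  also have "\<dots> = mat a ** (transpose B ** Jmat ** B)"
    by (simp only: matrix_mult_mat_left_commute matrix_mul_assoc[symmetric])
  also have "\<dots> = mat (a * b) ** Jmat"
    using assms(2) by (simp add: similitude_def matrix_mul_assoc mat_mult_mat)
  finally show ?thesis
    unfolding similitude_def .
qed

lemma Jmat_squared: "Jmat ** Jmat = (mat (-1) :: 'a::comm_ring_1 mat4)"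
  by (simp add: vec_eq_iff forall_4 sum_4 matrix_matrix_mult_def Jmat_def mat_def)

lemma similitude_inverse:
  fixes g :: "'a::field mat4"
  assumes g: "similitude g \<mu>" and "\<mu> \<noteq> 0"
  shows "matrix_inv g = mat (- inverse \<mu>) ** (Jmat ** transpose g ** Jmat)"
    and "matrix_inv g ** g = mat 1" "g ** matrix_inv g = mat 1"
    and "similitude (matrix_inv g) (inverse \<mu>)"
proof -
  define h where "h = mat (- inverse \<mu>) ** (Jmat ** transpose g ** Jmat)"
  have "h ** g = mat (- inverse \<mu>) ** (Jmat ** (transpose g ** Jmat ** g))"
    by (simp add: h_def matrix_mul_assoc)
  also have "\<dots> = mat (- inverse \<mu> * \<mu> * -1)"
    using g by (simp add: similitude_def matrix_mult_mat_left_commute Jmat_squared mat_mult_mat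
        matrix_mul_assoc[symmetric])
  finally have hg: "h ** g = mat 1"
    using \<open>\<mu> \<noteq> 0\<close> by simp
  then have gh: "g ** h = mat 1"
    by (rule matrix_left_right_inverse1)
  then show inv: "matrix_inv g = h"
    using hg by (rule matrix_inv_unique)
  show "matrix_inv g ** g = mat 1" "g ** matrix_inv g = mat 1"
    using inv hg gh by simp_all
  have "Jmat = transpose (g ** h) ** Jmat ** (g ** h)"
    using gh by (simp add: transpose_mat)
  also have "\<dots> = transpose h ** (transpose g ** Jmat ** g) ** h"
    by (simp add: matrix_transpose_mul matrix_mul_assoc)
  also have "\<dots> = mat \<mu> ** (transpose h ** Jmat ** h)"
    using g by (simp add: similitude_def matrix_mult_mat_left_commute matrix_mul_assoc[symmetric])
  finally have "mat (inverse \<mu>) ** Jmat = mat (inverse \<mu> * \<mu>) ** (transpose h ** Jmat ** h)"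
    by (metis mat_mult_mat matrix_mul_assoc)
  then show "similitude (matrix_inv g) (inverse \<mu>)"
    using \<open>\<mu> \<noteq> 0\<close> by (simp add: similitude_def inv)
qed

lemma similitude_mat: "similitude (mat c) (c * c :: 'a::comm_ring_1)"
proof -
  have "transpose (mat c) ** Jmat ** mat c = mat c ** (Jmat ** (mat c :: 'a mat4))"
    by (simp add: matrix_mul_assoc)
  also have "\<dots> = mat c ** (mat c ** Jmat)"
    by (simp only: mat_matrix_mult_commute)
  also have "\<dots> = mat (c * c) ** Jmat"
    by (simp add: matrix_mul_assoc mat_mult_mat)
  finally show ?thesis
    unfolding similitude_def .
qed

lemma similitude_u_min: "similitude (u_min x) (1 :: 'a::field)"
  by (simp add: similitude_def vec_eq_iff forall_4 sum_4 matrix_matrix_mult_def transpose_def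
      Jmat_def u_min_def mat_def)

lemma similitude_diag4:
  "a * c = b * d \<Longrightarrow> similitude (diag4 a b c d) (a * c :: 'a::field)"
  by (simp add: similitude_def vec_eq_iff forall_4 sum_4 matrix_matrix_mult_def transpose_def
      Jmat_def diag4_def mat_def mult.commute)

lemma diag4_scalar: "diag4 a a a a = (mat a :: 'a::field mat4)"
  by (simp add: vec_eq_iff forall_4 diag4_def mat_def)

lemma mat_mult_u_min:
  "mat c ** u_min x = (\<chi> i j. if i = j then c else if i = 0 \<and> j = 2 then c * x else (0::'a::field))"
  unfolding mat_matrix_mult by (simp add: u_min_def vec_eq_iff mat_def)

definition minor2 :: "'a::comm_ring_1^'n^'m \<Rightarrow> 'm \<Rightarrow> 'm \<Rightarrow> 'n \<Rightarrow> 'n \<Rightarrow> 'a" where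
  "minor2 A i j k l = A $ i $ k * A $ j $ l - A $ i $ l * A $ j $ k"

text \<open>Cauchy--Binet for \<open>2 \<times> 2\<close> minors, summed over ordered pairs of indices.\<close>

lemma matrix_mult_entry_product:
  fixes A :: "'a::comm_ring_1^'n::finite^'m" and B :: "'a^'p^'n"
  shows "(A ** B) $ i $ k * (A ** B) $ j $ l
           = (\<Sum>r\<in>UNIV. \<Sum>s\<in>UNIV. A $ i $ r * A $ j $ s * (B $ r $ k * B $ s $ l))"
  unfolding matrix_matrix_mult_def vec_lambda_beta sum_product
  by (intro sum.cong refl) (simp add: mult_ac)

lemma minor2_matrix_mult_left:
  fixes A :: "'a::comm_ring_1^'n::finite^'m" and B :: "'a^'p^'n"
  shows "minor2 (A ** B) i j k l = (\<Sum>r\<in>UNIV. \<Sum>s\<in>UNIV. A $ i $ r * A $ j $ s * minor2 B r s k l)"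
  unfolding minor2_def matrix_mult_entry_product
  by (simp add: sum_subtractf right_diff_distrib)

lemma minor2_matrix_mult_right:
  fixes A :: "'a::comm_ring_1^'n::finite^'m" and B :: "'a^'p^'n"
  shows "minor2 (A ** B) i j k l = (\<Sum>r\<in>UNIV. \<Sum>s\<in>UNIV. B $ r $ k * B $ s $ l * minor2 A i j r s)"
proof -
  have "(A ** B) $ i $ l * (A ** B) $ j $ k
      = (\<Sum>s\<in>UNIV. \<Sum>r\<in>UNIV. A $ i $ s * A $ j $ r * (B $ s $ l * B $ r $ k))"
    by (rule matrix_mult_entry_product)
  also have "\<dots> = (\<Sum>r\<in>UNIV. \<Sum>s\<in>UNIV. B $ r $ k * B $ s $ l * (A $ i $ s * A $ j $ r))"
    by (subst sum.swap) (simp add: mult_ac)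
  finally show ?thesis
    unfolding minor2_def matrix_mult_entry_product[of A B i k j l]
    by (simp add: sum_subtractf right_diff_distrib mult_ac)
qed

lemma minor2_mat_mult: "minor2 (mat c ** A) i j k l = c * c * minor2 A i j k l"
  by (simp add: minor2_def mat_matrix_mult algebra_simps)

lemma minor2_u_min: "minor2 (u_min x) i j k l \<in> {0, 1, -1, x, - x :: 'a::field}"
proof -
  have "\<forall>i j k l. minor2 (u_min x) i j k l \<in> {0, 1, -1, x, - x :: 'a::field}"
    unfolding forall_4 by (simp add: minor2_def u_min_def mat_def)
  then show ?thesis
    by blast
qed

lemma minor2_diag4: "minor2 (diag4 a b c d) 2 3 2 3 = c * d"
  by (simp add: minor2_def diag4_def)

text \<open>An explicit Cartan decomposition of \<open>t\<alpha> u_min x\<close>, \<open>x \<noteq> 0\<close>, with middle factor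
  \<open>diag(\<alpha>, \<alpha>w, \<alpha>, \<alpha>/w)\<close>; the outer factors lie in \<open>K\<^sub>p\<close> when \<open>t\<close> and \<open>x w\<close> are units and
  \<open>w\<close> and \<open>1 / x\<close> are integral.\<close>

definition cartan_left :: "'a::field \<Rightarrow> 'a \<Rightarrow> 'a \<Rightarrow> 'a mat4" where
  "cartan_left t e w = (\<chi> i j. if i = 1 \<and> j = 0 then t else if i = 2 \<and> j = 1 then t / e else
      if i = 3 \<and> j = 2 then t else if i = 0 \<and> j = 3 then - t * e else if i = 2 \<and> j = 3 then - t * w else 0)"

definition cartan_right :: "'a::field \<Rightarrow> 'a mat4" where
  "cartan_right y = (\<chi> i j. if i = 1 \<and> j = 0 then -1 else if i = 3 \<and> j = 0 then - y else
      if i = 0 \<and> j = 1 then 1 else if i = 3 \<and> j = 2 then -1 else if i = 2 \<and> j = 3 then 1 else 0)"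

lemma similitude_cartan_left: "e \<noteq> 0 \<Longrightarrow> similitude (cartan_left t e w) (t * t)"
  by (simp add: similitude_def vec_eq_iff forall_4 sum_4 matrix_matrix_mult_def transpose_def
      Jmat_def cartan_left_def mat_def)

lemma similitude_cartan_right: "similitude (cartan_right y) 1"
  by (simp add: similitude_def vec_eq_iff forall_4 sum_4 matrix_matrix_mult_def transpose_def
      Jmat_def cartan_right_def mat_def)

lemma cartan_decomposition_u_min:
  fixes x w \<alpha> t :: "'a::field"
  assumes "x \<noteq> 0" "w \<noteq> 0"
  shows "cartan_left t (x * w) w ** diag4 \<alpha> (\<alpha> * w) \<alpha> (\<alpha> / w) ** cartan_right (1 / x)
           = mat (t * \<alpha>) ** u_min x"
  using assms by (simp add: vec_eq_iff forall_4 sum_4 matrix_matrix_mult_def cartan_left_def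
      cartan_right_def diag4_def mat_def u_min_def)

section \<open>The field \<open>\<rat>\<^sub>p\<close>\<close>

lemma exists_int_mult_cong:
  fixes a b N :: int
  assumes "coprime b N" "N > 0"
  shows "\<exists>j. 0 \<le> j \<and> j < N \<and> N dvd a - j * b"
proof -
  obtain s t where st: "s * b + t * N = 1"
    using assms(1) by (metis bezout_int coprime_iff_gcd_eq_1)
  have "(a * s) mod N = a * s - N * (a * s div N)"
    by (simp add: minus_div_mult_eq_mod[symmetric] mult.commute)
  then have "a - (a * s) mod N * b = a * (s * b + t * N) - (a * s - N * (a * s div N)) * b"
    by (simp add: st)
  also have "\<dots> = N * (a * t + a * s div N * b)"
    by (simp add: algebra_simps)
  finally show ?thesis
    using assms(2) by (intro exI[of _ "(a * s) mod N"]) simp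
qed

locale padic_completion =
  fixes p :: nat and absv :: "'a::field_char_0 \<Rightarrow> real"
  assumes prime_p: "prime p" and is_Qp: "is_Qp p absv"
begin

definition ppow :: "int \<Rightarrow> real" where
  "ppow n = real p powr real_of_int n"

lemma absv_nonneg [simp]: "absv x \<ge> 0"
  using is_Qp unfolding is_Qp_def by (elim conjE) (simp only:)

lemma absv_eq_0_iff [simp]: "absv x = 0 \<longleftrightarrow> x = 0"
  using is_Qp unfolding is_Qp_def by (elim conjE) (simp only:)

lemma absv_0 [simp]: "absv 0 = 0"
  by simp

lemma absv_mult: "absv (x * y) = absv x * absv y"
  using is_Qp unfolding is_Qp_def by (elim conjE) (simp only:)

lemma absv_add_le_max: "absv (x + y) \<le> max (absv x) (absv y)"
  using is_Qp unfolding is_Qp_def by (elim conjE) (simp only:)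

lemma absv_of_rat: "absv (of_rat q) = padic_abs_rat p q"
  using is_Qp unfolding is_Qp_def by (elim conjE) (simp only:)

lemma absv_approx_rat: "e > 0 \<Longrightarrow> \<exists>q. absv (x - of_rat q) < e"
  using is_Qp unfolding is_Qp_def by (elim conjE) (simp only:)

lemma p_gt_1: "real p > 1"
  using prime_p prime_gt_1_nat by auto

lemma p_pos: "real p > 0"
  using p_gt_1 by auto

lemma inverse_p_less_1: "inverse (real p) < 1"
  using p_gt_1 by (simp add: inverse_less_1_iff)

lemma ppow_pos [simp]: "ppow n > 0"
  using p_pos by (simp add: ppow_def)

lemma ppow_nonneg [simp]: "ppow n \<ge> 0"
  and ppow_neq_0 [simp]: "ppow n \<noteq> 0"
  using ppow_pos[of n] by linarith+

lemma ppow_le_iff [simp]: "ppow a \<le> ppow b \<longleftrightarrow> a \<le> b"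
  and ppow_less_iff [simp]: "ppow a < ppow b \<longleftrightarrow> a < b"
  and ppow_eq_iff [simp]: "ppow a = ppow b \<longleftrightarrow> a = b"
  using p_gt_1 by (auto simp: ppow_def powr_inj)

lemma ppow_add: "ppow (a + b) = ppow a * ppow b"
  by (simp add: ppow_def powr_add)

lemma ppow_0 [simp]: "ppow 0 = 1"
  using p_pos by (simp add: ppow_def)

lemma ppow_minus: "ppow (- n) = inverse (ppow n)"
  by (simp add: ppow_def powr_minus)

lemma ppow_of_nat: "ppow (int n) = real p ^ n"
  using p_pos by (simp add: ppow_def powr_realpow)

lemma ppow_minus_of_nat: "ppow (- int n) = inverse (real p ^ n)"
  by (simp add: ppow_minus ppow_of_nat)

lemma absv_1 [simp]: "absv 1 = 1"
  using absv_mult[of 1 1] by simp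

lemma absv_minus [simp]: "absv (- x) = absv x"
proof -
  have "absv (-1) ^ 2 = 1"
    using absv_mult[of "-1" "-1"] by (simp add: power2_eq_square)
  then have "absv (-1) = 1"
    using absv_nonneg[of "-1"] by (simp add: power2_eq_1_iff)
  then show ?thesis
    using absv_mult[of "-1" x] by simp
qed

lemma absv_minus_commute: "absv (x - y) = absv (y - x)"
  by (metis absv_minus minus_diff_eq)

lemma absv_inverse: "absv (inverse x) = inverse (absv x)"
  by (cases "x = 0") (auto intro: inverse_unique[symmetric] simp: absv_mult[symmetric])

lemma absv_divide: "absv (x / y) = absv x / absv y"
  by (simp add: divide_inverse absv_mult absv_inverse)

lemma absv_divide_eq_mult: "absv s = inverse r \<Longrightarrow> absv (u / s) = absv u * r"
  by (simp only: divide_inverse absv_mult absv_inverse inverse_inverse_eq)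

lemma absv_power: "absv (x ^ n) = absv x ^ n"
  by (induction n) (simp_all add: absv_mult)

lemma absv_add_le: "absv x \<le> B \<Longrightarrow> absv y \<le> B \<Longrightarrow> absv (x + y) \<le> B"
  using absv_add_le_max[of x y] by simp

lemma absv_diff_le: "absv x \<le> B \<Longrightarrow> absv y \<le> B \<Longrightarrow> absv (x - y) \<le> B"
  using absv_add_le[of x B "-y"] by simp

lemma absv_add_eq_left: "absv y < absv x \<Longrightarrow> absv (x + y) = absv x"
  using absv_add_le_max[of x y] absv_add_le_max[of "x + y" "- y"] by auto

lemma absv_sum_le:
  "finite S \<Longrightarrow> 0 \<le> B \<Longrightarrow> (\<And>i. i \<in> S \<Longrightarrow> absv (f i) \<le> B) \<Longrightarrow> absv (sum f S) \<le> B"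
  by (induction S rule: finite_induct) (auto intro!: absv_add_le)

lemma absv_of_nat_le_1: "absv (of_nat n) \<le> 1"
  by (induction n) (auto intro!: absv_add_le)

lemma absv_of_int_le_1: "absv (of_int n) \<le> 1"
  by (cases n rule: int_cases) (simp_all add: absv_of_nat_le_1 del: of_nat_Suc)

lemma absv_of_nat_p: "absv (of_nat p) = inverse (real p)"
proof -
  have "quotient_of (of_nat p :: rat) = (int p, 1)"
    using quotient_of_int[of "int p"] by (simp add: Rat.of_int_def)
  moreover have "multiplicity (int p) (int p) = 1"
    using prime_p by (intro multiplicity_self) (auto simp: prime_gt_0_nat)
  ultimately have "padic_abs_rat p (of_nat p) = inverse (real p)"
    using prime_p p_pos by (simp add: padic_abs_rat_def padic_val_rat_def powr_minus prime_gt_0_nat)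
  then show ?thesis
    using absv_of_rat[of "of_nat p"] by simp
qed

lemma absv_p_powi: "absv ((of_nat p :: 'a) powi n) = ppow (- n)"
proof (cases "n \<ge> 0")
  case True
  then have "absv ((of_nat p :: 'a) powi n) = inverse (real p ^ nat n)"
    by (simp add: power_int_def absv_power absv_of_nat_p power_inverse)
  then show ?thesis
    using True ppow_minus_of_nat[of "nat n"] by simp
next
  case False
  then have "absv ((of_nat p :: 'a) powi n) = real p ^ nat (- n)"
    by (simp add: power_int_def absv_power absv_of_nat_p absv_inverse)
  then show ?thesis
    using False ppow_of_nat[of "nat (- n)"] by simp
qed

lemma absv_of_int_eq_1: assumes "\<not> int p dvd n" shows "absv (of_int n) = 1"
proof -
  have "coprime (int p) n"
    using assms prime_p by (simp add: prime_imp_coprime prime_nat_iff_prime)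
  then obtain u v where uv: "u * int p + v * n = 1"
    by (metis bezout_int coprime_iff_gcd_eq_1)
  have "absv (of_int u * of_nat p :: 'a) \<le> inverse (real p)"
    using absv_of_int_le_1[of u] p_pos by (simp add: absv_mult absv_of_nat_p mult_left_le_one_le)
  moreover have "absv (of_int v * of_int n :: 'a) \<le> absv (of_int n :: 'a)"
    using absv_of_int_le_1[of v] by (simp add: absv_mult mult_left_le_one_le)
  moreover have "1 = absv (of_int u * of_nat p + of_int v * of_int n :: 'a)"
    using arg_cong[OF uv, of "\<lambda>t. absv (of_int t :: 'a)"] by simp
  ultimately have "1 \<le> max (inverse (real p)) (absv (of_int n :: 'a))"
    by (metis absv_add_le_max max.mono order.trans)
  then show ?thesis
    using absv_of_int_le_1[of n] inverse_p_less_1 by linarith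
qed

lemma pow_dvd_if_absv_of_int_le:
  "absv (of_int d) \<le> inverse (real p ^ k) \<Longrightarrow> int p ^ k dvd d"
proof (induction k arbitrary: d)
  case (Suc k)
  have "inverse (real p ^ Suc k) < 1"
    using p_gt_1 by (simp add: inverse_less_1_iff one_less_power del: power_Suc)
  then have "absv (of_int d) \<noteq> 1"
    using Suc.prems by linarith
  then obtain d' where d: "d = int p * d'"
    using absv_of_int_eq_1 by (metis dvdE)
  then have "inverse (real p) * absv (of_int d') \<le> inverse (real p) * inverse (real p ^ k)"
    using Suc.prems by (simp add: absv_mult absv_of_nat_p)
  then have "int p ^ k dvd d'"
    using Suc.IH p_pos by simp
  then show ?case
    using d by simp
qed simp

lemma absv_of_nat_diff_gt:
  assumes "j < p ^ n" "j' < p ^ n" "j \<noteq> j'"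
  shows "absv (of_nat j - of_nat j') > inverse (real p ^ n)"
proof (rule ccontr)
  assume "\<not> ?thesis"
  then have "int p ^ n dvd int j - int j'"
    by (intro pow_dvd_if_absv_of_int_le) simp
  then have "\<bar>int p ^ n\<bar> \<le> \<bar>int j - int j'\<bar>"
    using assms(3) by (intro dvd_imp_le_int) auto
  moreover have "int j < int p ^ n" "int j' < int p ^ n"
    using assms(1,2) by (metis of_nat_less_iff of_nat_power)+
  ultimately show False
    by linarith
qed

lemma not_dvd_denominator:
  assumes q: "quotient_of q = (a, b)" and q1: "absv (of_rat q) \<le> 1"
  shows "\<not> int p dvd b"
proof
  assume pb: "int p dvd b"
  have "b \<noteq> 0"
    using q quotient_of_denom_pos by fastforce
  have "\<not> int p dvd a"
  proof
    assume "int p dvd a"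
    with pb have "int p dvd gcd a b"
      by simp
    then show False
      using q quotient_of_coprime prime_p by (auto simp: prime_gt_1_nat)
  qed
  then have a: "absv (of_int a :: 'a) = 1"
    by (rule absv_of_int_eq_1)
  obtain b' where b': "b = int p * b'"
    using pb by blast
  have "absv (of_int b :: 'a) \<le> inverse (real p)"
    using absv_of_int_le_1[of b'] p_pos by (simp add: b' absv_mult absv_of_nat_p mult_left_le)
  moreover have "absv (of_int b :: 'a) > 0"
    using \<open>b \<noteq> 0\<close> by (simp add: less_le)
  moreover have "(of_rat q :: 'a) = of_int a / of_int b"
    using quotient_of_div[OF q] by (simp add: of_rat_divide)
  ultimately have "absv (of_rat q :: 'a) \<ge> real p"
    using a p_pos by (simp add: absv_divide field_simps)
  then show False
    using q1 p_gt_1 by linarith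
qed

lemma rat_close_to_nat:
  assumes "absv (of_rat q) \<le> 1"
  shows "\<exists>j < p ^ n. absv (of_rat q - of_nat j) \<le> inverse (real p ^ n)"
proof -
  obtain a b where q: "quotient_of q = (a, b)"
    by fastforce
  have "int p ^ n > 0"
    using prime_p prime_gt_0_nat by simp
  moreover have "coprime (int p) b"
    using not_dvd_denominator[OF q assms] prime_p by (simp add: prime_imp_coprime)
  then have "coprime b (int p ^ n)"
    by (simp add: coprime_commute)
  ultimately obtain j where j: "0 \<le> j" "j < int p ^ n" "int p ^ n dvd a - j * b"
    using exists_int_mult_cong by blast
  then obtain w where w: "a - j * b = int p ^ n * w"
    by blast
  have "b > 0"
    using q quotient_of_denom_pos by blast
  have "(of_rat q :: 'a) = of_int a / of_int b"
    using quotient_of_div[OF q] by (simp add: of_rat_divide)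
  then have "(of_rat q :: 'a) - of_int j = of_int (a - j * b) / of_int b"
    using \<open>b > 0\<close> by (simp add: field_simps)
  also have "\<dots> = of_nat p ^ n * of_int w / of_int b"
    by (simp add: w)
  finally have "absv ((of_rat q :: 'a) - of_int j) = inverse (real p) ^ n * absv (of_int w :: 'a)"
    using absv_of_int_eq_1[OF not_dvd_denominator[OF q assms]]
    by (simp add: absv_divide absv_mult absv_power absv_of_nat_p)
  also have "\<dots> \<le> inverse (real p ^ n)"
    using absv_of_int_le_1[of w] p_pos by (simp add: power_inverse mult_left_le)
  finally have "absv ((of_rat q :: 'a) - of_nat (nat j)) \<le> inverse (real p ^ n)"
    using j(1) by simp
  moreover have "nat j < p ^ n"
    using j(1,2) by (simp add: nat_less_iff)
  ultimately show ?thesis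
    by blast
qed

lemma exists_nat_close:
  assumes "absv y \<le> 1"
  shows "\<exists>j < p ^ n. absv (y - of_nat j) \<le> inverse (real p ^ n)"
proof -
  have pn: "0 < inverse (real p ^ n)" "inverse (real p ^ n) \<le> 1"
    using p_gt_1 by (simp_all add: inverse_le_1_iff one_le_power)
  then obtain q where q: "absv (y - of_rat q) < inverse (real p ^ n)"
    using absv_approx_rat by blast
  have "absv (of_rat q :: 'a) \<le> 1"
    using absv_diff_le[of y 1 "y - of_rat q"] q pn assms by simp
  then obtain j where "j < p ^ n" "absv ((of_rat q :: 'a) - of_nat j) \<le> inverse (real p ^ n)"
    using rat_close_to_nat by blast
  moreover have "y - of_nat j = (y - of_rat q) + (of_rat q - of_nat j)"
    by simp
  ultimately show ?thesis
    using q by (metis absv_add_le less_imp_le)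
qed

lemma absv_eq_ppow: assumes "x \<noteq> 0" shows "\<exists>k. absv x = ppow k"
proof -
  obtain q where q: "absv (x - of_rat q) < absv x"
    using assms absv_approx_rat[of "absv x"] by (auto simp: less_le)
  then have "absv (of_rat q :: 'a) = absv x"
    using absv_add_eq_left[of "of_rat q - x" x] by (simp add: absv_minus_commute)
  moreover have "q \<noteq> 0"
    using assms calculation by auto
  ultimately have "absv x = ppow (- padic_val_rat p q)"
    by (simp add: absv_of_rat padic_abs_rat_def ppow_def)
  then show ?thesis
    by blast
qed

definition pball :: "'a \<Rightarrow> int \<Rightarrow> 'a set" where
  "pball x e = {y. absv (y - x) \<le> ppow e}"

definition psphere :: "int \<Rightarrow> 'a set" where
  "psphere e = {y. absv y = ppow e}"

lemma pball_translate: "(\<lambda>y. t + y) ` pball 0 e = pball t e"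
proof -
  have "y \<in> (\<lambda>y. t + y) ` pball 0 e" if "y \<in> pball t e" for y
    using that by (intro image_eqI[of _ _ "y - t"]) (auto simp: pball_def)
  then show ?thesis
    by (auto simp: pball_def)
qed

lemma pball_mono: assumes "d \<le> e" shows "pball x d \<subseteq> pball x e"
  using assms by (auto simp: pball_def intro: order_trans)

lemma pball_0_0: "pball 0 0 = {y. absv y \<le> 1}"
  by (simp add: pball_def)

lemma psphere_eq_Diff: "psphere e = pball 0 e - pball 0 (e - 1)"
proof
  show "psphere e \<subseteq> pball 0 e - pball 0 (e - 1)"
    by (auto simp: psphere_def pball_def)
  show "pball 0 e - pball 0 (e - 1) \<subseteq> psphere e"
  proof
    fix y assume y: "y \<in> pball 0 e - pball 0 (e - 1)"
    then have "y \<noteq> 0"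
      by (auto simp: pball_def)
    then obtain k where "absv y = ppow k"
      using absv_eq_ppow by blast
    with y show "y \<in> psphere e"
      by (auto simp: psphere_def pball_def)
  qed
qed

text \<open>For \<open>|s| = p\<^sup>-\<^sup>e\<^sup>-\<^sup>n\<close> the map \<open>y \<mapsto> s y\<close> takes the ball of radius \<open>p\<^sup>e\<^sup>+\<^sup>n\<close> onto \<open>\<int>\<^sub>p\<close>, so the
  residues \<open>j < p\<^sup>n\<close> cut it into the disjoint translates of the ball of radius \<open>p\<^sup>e\<close> by \<open>j / s\<close>.\<close>

lemma pball_eq_union_translates:
  assumes s: "absv s = inverse (ppow (e + int n))"
  shows "pball 0 (e + int n) = (\<Union>j<p ^ n. (\<lambda>y. of_nat j / s + y) ` pball 0 e)"
proof -
  note absv_div_s = absv_divide_eq_mult[OF s]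
  have ppow_e: "ppow e = inverse (real p ^ n) * ppow (e + int n)"
    using p_pos by (simp add: ppow_add ppow_of_nat)
  show ?thesis
  proof (intro equalityI subsetI)
    fix y assume "y \<in> pball 0 (e + int n)"
    then have "absv (s * y) \<le> 1"
      using ppow_pos[of "e + int n"]
      by (simp add: pball_def absv_mult s inverse_eq_divide pos_divide_le_eq)
    then obtain j where j: "j < p ^ n" "absv (s * y - of_nat j) \<le> inverse (real p ^ n)"
      using exists_nat_close by blast
    have "s \<noteq> 0"
      using s by auto
    then have "y - of_nat j / s = (s * y - of_nat j) / s"
      by (simp add: field_simps)
    then have "y \<in> pball (of_nat j / s) e"
      using j(2) by (simp add: pball_def absv_div_s ppow_e mult_right_mono)
    then show "y \<in> (\<Union>j<p ^ n. (\<lambda>y. of_nat j / s + y) ` pball 0 e)"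
      using j(1) by (auto simp: pball_translate)
  next
    fix y assume "y \<in> (\<Union>j<p ^ n. (\<lambda>y. of_nat j / s + y) ` pball 0 e)"
    then obtain j where "y \<in> pball (of_nat j / s) e"
      unfolding pball_translate by blast
    then have "absv (y - of_nat j / s) \<le> ppow (e + int n)"
      using pball_mono[of e "e + int n"] by (auto simp: pball_def)
    moreover have "absv (of_nat j / s) \<le> ppow (e + int n)"
      using absv_of_nat_le_1[of j] by (simp add: absv_div_s mult_left_le_one_le)
    ultimately have "absv ((y - of_nat j / s) + of_nat j / s) \<le> ppow (e + int n)"
      by (rule absv_add_le)
    then show "y \<in> pball 0 (e + int n)"
      by (simp add: pball_def)
  qed
qed

lemma disjoint_family_translates_pball:
  assumes s: "absv s = inverse (ppow (e + int n))"
  shows "disjoint_family_on (\<lambda>j. (\<lambda>y. of_nat j / s + y) ` pball 0 e) {..<p ^ n}"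
  unfolding disjoint_family_on_def
proof (intro ballI impI equals0I)
  fix i j z assume ij: "i \<in> {..<p ^ n}" "j \<in> {..<p ^ n}" "i \<noteq> j"
    and "z \<in> (\<lambda>y. of_nat i / s + y) ` pball 0 e \<inter> (\<lambda>y. of_nat j / s + y) ` pball 0 e"
  then have "z \<in> pball (of_nat i / s) e" "z \<in> pball (of_nat j / s) e"
    unfolding pball_translate by blast+
  then have "absv (z - of_nat i / s) \<le> ppow e" "absv (z - of_nat j / s) \<le> ppow e"
    by (simp_all add: pball_def)
  then have "absv ((z - of_nat j / s) - (z - of_nat i / s)) \<le> ppow e"
    by (rule absv_diff_le[rotated])
  then have "absv ((of_nat i - of_nat j) / s) \<le> ppow e"
    by (simp add: diff_divide_distrib)
  moreover have "ppow e = inverse (real p ^ n) * ppow (e + int n)"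
    using p_pos by (simp add: ppow_add ppow_of_nat)
  ultimately have "absv (of_nat i - of_nat j :: 'a) \<le> inverse (real p ^ n)"
    by (simp add: absv_divide_eq_mult[OF s])
  then show False
    using absv_of_nat_diff_gt[of i n j] ij by simp
qed

section \<open>The maximal compact subgroup \<open>K\<^sub>p\<close> and its double cosets\<close>

lemma Kp_iff:
  "k \<in> Kp absv \<longleftrightarrow> (\<forall>i j. absv (k $ i $ j) \<le> 1) \<and> (\<exists>\<mu>. absv \<mu> = 1 \<and> similitude k \<mu>)"
proof -
  have unit: "\<mu> \<noteq> 0 \<and> absv \<mu> \<le> 1 \<and> absv (inverse \<mu>) \<le> 1 \<and> P \<longleftrightarrow> absv \<mu> = 1 \<and> P" for \<mu> P
    by (cases "\<mu> = 0") (auto simp: absv_inverse inverse_le_1_iff dest: order_antisym[OF _ absv_nonneg])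
  show ?thesis
    unfolding Kp_def GSp4_def similitude_def by (simp add: unit)
qed

lemma Kp_intro:
  "(\<And>i j. absv (k $ i $ j) \<le> 1) \<Longrightarrow> similitude k \<mu> \<Longrightarrow> absv \<mu> = 1 \<Longrightarrow> k \<in> Kp absv"
  unfolding Kp_iff by blast

lemma absv_matrix_mult_le:
  fixes A B :: "'a mat4"
  assumes "\<And>i j. absv (A $ i $ j) \<le> a" "\<And>i j. absv (B $ i $ j) \<le> b"
  shows "absv ((A ** B) $ i $ j) \<le> a * b"
proof -
  have "0 \<le> a" "0 \<le> b"
    using assms(1)[of 0 0] assms(2)[of 0 0] absv_nonneg order_trans by blast+
  then show ?thesis
    unfolding matrix_matrix_mult_def vec_lambda_beta
    by (intro absv_sum_le) (auto simp: absv_mult intro: mult_mono assms)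
qed

lemma Kp_mult: assumes "k \<in> Kp absv" "k' \<in> Kp absv" shows "k ** k' \<in> Kp absv"
proof -
  obtain \<mu> \<mu>' where "absv \<mu> = 1" "similitude k \<mu>" "absv \<mu>' = 1" "similitude k' \<mu>'"
    using assms unfolding Kp_iff by blast
  moreover have "absv ((k ** k') $ i $ j) \<le> 1" for i j
    using absv_matrix_mult_le[of k 1 k' 1 i j] assms by (simp add: Kp_iff)
  ultimately show ?thesis
    unfolding Kp_iff by (metis absv_mult mult_1_right similitude_mult)
qed

lemma Kp_matrix_inv:
  assumes "k \<in> Kp absv"
  shows "matrix_inv k \<in> Kp absv" "matrix_inv k ** k = mat 1" "k ** matrix_inv k = mat 1"
proof -
  obtain \<mu> where \<mu>: "absv \<mu> = 1" "similitude k \<mu>" and k: "\<And>i j. absv (k $ i $ j) \<le> 1"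
    using assms unfolding Kp_iff by blast
  then have "\<mu> \<noteq> 0"
    by auto
  note inv = similitude_inverse[OF \<mu>(2) this]
  show "matrix_inv k ** k = mat 1" "k ** matrix_inv k = mat 1"
    using inv(2,3) by blast+
  have J: "absv ((Jmat :: 'a mat4) $ i $ j) \<le> 1" for i j
    by (simp add: Jmat_def)
  have "absv ((Jmat ** transpose k ** Jmat) $ i $ j) \<le> 1" for i j
    using absv_matrix_mult_le[OF absv_matrix_mult_le[OF J, of "transpose k" 1] J] k
    by (simp add: transpose_def)
  moreover have "absv ((mat (- inverse \<mu>) :: 'a mat4) $ i $ j) \<le> 1" for i j
    using \<mu> by (simp add: mat_def absv_inverse)
  ultimately have "absv (matrix_inv k $ i $ j) \<le> 1" for i j
    unfolding inv(1) using absv_matrix_mult_le[of "mat (- inverse \<mu>)" 1] by fastforce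
  moreover have "absv (inverse \<mu>) = 1"
    using \<mu> by (simp add: absv_inverse)
  ultimately show "matrix_inv k \<in> Kp absv"
    using inv(4) unfolding Kp_iff by blast
qed

lemma mat_1_in_Kp: "mat 1 \<in> Kp absv"
proof -
  have "similitude (mat 1) (1 :: 'a)"
    using similitude_mat[of "1 :: 'a"] by simp
  moreover have "absv ((mat 1 :: 'a mat4) $ i $ j) \<le> 1" for i j
    by (simp add: mat_def)
  ultimately show ?thesis
    unfolding Kp_iff using absv_1 by blast
qed

definition Kp_double_coset :: "'a mat4 \<Rightarrow> 'a mat4 set" where
  "Kp_double_coset D = {k1 ** D ** k2 | k1 k2. k1 \<in> Kp absv \<and> k2 \<in> Kp absv}"

definition Kp_congruence :: "real \<Rightarrow> 'a mat4 set" where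
  "Kp_congruence r = {k \<in> Kp absv. \<forall>i j. absv (k $ i $ j - mat 1 $ i $ j) \<le> r}"

lemma Kp_double_coset_mult:
  assumes "g \<in> Kp_double_coset D" "a \<in> Kp absv" "b \<in> Kp absv"
  shows "a ** g ** b \<in> Kp_double_coset D"
proof -
  obtain k1 k2 where "g = k1 ** D ** k2" "k1 \<in> Kp absv" "k2 \<in> Kp absv"
    using assms(1) unfolding Kp_double_coset_def by blast
  moreover have "a ** (k1 ** D ** k2) ** b = (a ** k1) ** D ** (k2 ** b)"
    by (simp add: matrix_mul_assoc)
  ultimately show ?thesis
    unfolding Kp_double_coset_def using Kp_mult assms(2,3) by blast
qed

lemma Kp_double_coset_sym:
  assumes "g \<in> Kp_double_coset D"
  shows "D \<in> Kp_double_coset g"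
proof -
  obtain k1 k2 where g: "g = k1 ** D ** k2" "k1 \<in> Kp absv" "k2 \<in> Kp absv"
    using assms unfolding Kp_double_coset_def by blast
  have "matrix_inv k1 ** g ** matrix_inv k2 = (matrix_inv k1 ** k1) ** D ** (k2 ** matrix_inv k2)"
    by (simp add: g matrix_mul_assoc)
  then have "D = matrix_inv k1 ** g ** matrix_inv k2"
    using Kp_matrix_inv g(2,3) by simp
  then show ?thesis
    unfolding Kp_double_coset_def using Kp_matrix_inv g(2,3) by blast
qed

lemma Kp_congruence_conj:
  assumes "g \<in> Kp_congruence r" "a \<in> Kp absv" "b \<in> Kp absv" "a ** b = mat 1"
  shows "a ** g ** b \<in> Kp_congruence r"
proof -
  have "a ** g ** b - mat 1 = a ** (g - mat 1) ** b"
    using assms(4) by (simp add: matrix_diff_mult matrix_mult_diff)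
  moreover have "absv ((g - mat 1) $ i $ j) \<le> r" for i j
    using assms(1) by (simp add: Kp_congruence_def)
  ultimately have "absv ((a ** g ** b - mat 1) $ i $ j) \<le> r" for i j
    using absv_matrix_mult_le[OF absv_matrix_mult_le, of a 1 "g - mat 1" r b 1 i j] assms(2,3)
    by (simp add: Kp_iff)
  moreover have "a ** g ** b \<in> Kp absv"
    using assms Kp_mult by (simp add: Kp_congruence_def)
  ultimately show ?thesis
    by (simp add: Kp_congruence_def)
qed

definition Kp_conj_invariant :: "'a mat4 set \<Rightarrow> bool" where
  "Kp_conj_invariant S \<longleftrightarrow> (\<forall>k \<in> Kp absv. \<forall>g. matrix_inv k ** g ** k \<in> S \<longleftrightarrow> g \<in> S)"

lemma Kp_conj_invariantI:
  assumes invariant: "\<And>g a b. g \<in> S \<Longrightarrow> a \<in> Kp absv \<Longrightarrow> b \<in> Kp absv \<Longrightarrow> a ** b = mat 1 \<Longrightarrow> a ** g ** b \<in> S"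
  shows "Kp_conj_invariant S"
  unfolding Kp_conj_invariant_def
proof (intro ballI allI iffI)
  fix k g assume k: "k \<in> Kp absv"
  have "k ** (matrix_inv k ** g ** k) ** matrix_inv k = (k ** matrix_inv k) ** g ** (k ** matrix_inv k)"
    by (simp add: matrix_mul_assoc)
  then have "k ** (matrix_inv k ** g ** k) ** matrix_inv k = g"
    using Kp_matrix_inv[OF k] by simp
  then show "matrix_inv k ** g ** k \<in> S \<Longrightarrow> g \<in> S"
    using invariant Kp_matrix_inv[OF k] k by metis
  show "g \<in> S \<Longrightarrow> matrix_inv k ** g ** k \<in> S"
    using invariant Kp_matrix_inv[OF k] k by blast
qed

lemma Kp_conj_invariant_double_coset: "Kp_conj_invariant (Kp_double_coset D)"
  by (rule Kp_conj_invariantI) (rule Kp_double_coset_mult)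

lemma Kp_conj_invariant_congruence: "Kp_conj_invariant (Kp_congruence r)"
  by (rule Kp_conj_invariantI) (rule Kp_congruence_conj)

lemma h_level_eq_indicator: "h_level p absv l = indicator (Kp_congruence (ppow (- int l)))"
  by (simp add: h_level_def Kp_congruence_def ppow_def)

lemma Kp_double_coset_entries_le:
  assumes "g \<in> Kp_double_coset D" "\<And>i j. absv (D $ i $ j) \<le> B"
  shows "absv (g $ i $ j) \<le> B"
proof -
  obtain k1 k2 where "g = k1 ** D ** k2" "k1 \<in> Kp absv" "k2 \<in> Kp absv"
    using assms(1) unfolding Kp_double_coset_def by blast
  then show ?thesis
    using absv_matrix_mult_le[OF absv_matrix_mult_le[OF _ assms(2)], of k1 1 k2 1 i j]
    by (simp add: Kp_iff)
qed

lemma Kp_double_coset_minor2_le: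
  assumes "g \<in> Kp_double_coset D" "\<And>i j k l. absv (minor2 D i j k l) \<le> M"
  shows "absv (minor2 g i j k l) \<le> M"
proof -
  obtain k1 k2 where g: "g = k1 ** D ** k2" "k1 \<in> Kp absv" "k2 \<in> Kp absv"
    using assms(1) unfolding Kp_double_coset_def by blast
  have "0 \<le> M"
    using assms(2)[of 0 0 0 0] absv_nonneg[of "minor2 D 0 0 0 0"] by linarith
  have entries: "absv (k $ i $ j) \<le> 1" if "k \<in> Kp absv" for k i j
    using that by (simp add: Kp_iff)
  have product_le: "absv (a * b * m) \<le> M" if "absv a \<le> 1" "absv b \<le> 1" "absv m \<le> M" for a b m
  proof -
    have "absv a * absv b * absv m \<le> 1 * 1 * M"
      using that \<open>0 \<le> M\<close> by (intro mult_mono) auto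
    then show ?thesis
      by (simp add: absv_mult)
  qed
  have inner: "absv (minor2 (D ** k2) r s k l) \<le> M" for r s
    unfolding minor2_matrix_mult_right
    by (intro absv_sum_le finite \<open>0 \<le> M\<close> product_le entries[OF g(3)] assms(2))
  show ?thesis
    unfolding g(1) matrix_mul_assoc[symmetric] minor2_matrix_mult_left[of k1 "D ** k2"]
    by (intro absv_sum_le finite \<open>0 \<le> M\<close> product_le entries[OF g(2)] inner)
qed

lemma Kp_double_coset_similitude:
  assumes "g \<in> Kp_double_coset D" "similitude g \<mu>" "similitude D \<nu>"
  shows "absv \<mu> = absv \<nu>"
proof -
  obtain k1 k2 where "g = k1 ** D ** k2" "k1 \<in> Kp absv" "k2 \<in> Kp absv"
    using assms(1) unfolding Kp_double_coset_def by blast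
  moreover obtain \<mu>1 \<mu>2 where "absv \<mu>1 = 1" "similitude k1 \<mu>1" "absv \<mu>2 = 1" "similitude k2 \<mu>2"
    using calculation unfolding Kp_iff by blast
  ultimately have "similitude g (\<mu>1 * \<nu> * \<mu>2)" "absv (\<mu>1 * \<nu> * \<mu>2) = absv \<nu>"
    using assms(3) by (simp_all add: similitude_mult absv_mult)
  then show ?thesis
    using similitude_factor_unique assms(2) by metis
qed

lemma absv_mat_mult_u_min_entry: "absv ((mat c ** u_min x) $ i $ j) \<le> absv c * max 1 (absv x)"
proof -
  have "absv c * 1 \<le> absv c * max 1 (absv x)" "absv c * absv x \<le> absv c * max 1 (absv x)"
    by (intro mult_left_mono; simp)+
  then show ?thesis
    unfolding mat_mult_u_min by (auto simp: absv_mult)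
qed

lemma absv_minor2_mat_mult_u_min: "absv (minor2 (mat c ** u_min x) i j k l) \<le> absv c * absv c * max 1 (absv x)"
proof -
  have "absv (minor2 (u_min x) i j k l) \<le> max 1 (absv x)"
    using minor2_u_min[of x i j k l] by auto
  then show ?thesis
    unfolding minor2_mat_mult absv_mult by (simp add: mult_left_mono)
qed

definition cartan_diag :: "int \<Rightarrow> int \<Rightarrow> int \<Rightarrow> 'a mat4" where
  "cartan_diag a1 a2 a3 = diag4 (of_nat p powi (- a1)) (of_nat p powi (- a2))
                              (of_nat p powi (a1 - a3)) (of_nat p powi (a2 - a3))"

lemma h_coset_eq_indicator: "h_coset p absv a1 a2 a3 = indicator (Kp_double_coset (cartan_diag a1 a2 a3))"
  unfolding h_coset_def Kp_double_coset_def cartan_diag_def by simp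

lemma similitude_cartan_diag: "similitude (cartan_diag a1 a2 a3) (of_nat p powi (- a3))"
proof -
  have "(of_nat p :: 'a) powi (- a1) * of_nat p powi (a1 - a3) = of_nat p powi (- a3)"
    "(of_nat p :: 'a) powi (- a2) * of_nat p powi (a2 - a3) = of_nat p powi (- a3)"
    using p_pos by (simp_all flip: power_int_add)
  then show ?thesis
    unfolding cartan_diag_def by (metis similitude_diag4)
qed

lemma u_min_double_coset_absv:
  assumes "mat c ** u_min x \<in> Kp_double_coset (cartan_diag a1 a2 a3)"
  shows "absv c * absv c = ppow a3"
  using Kp_double_coset_similitude[OF assms similitude_mult[OF similitude_mat similitude_u_min]
      similitude_cartan_diag]
  by (simp add: absv_mult absv_p_powi)

lemma even_if_u_min_in_double_coset:
  assumes "mat c ** u_min x \<in> Kp_double_coset (cartan_diag a1 a2 a3)"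
  shows "even a3"
proof -
  have "absv c * absv c = ppow a3"
    using assms by (rule u_min_double_coset_absv)
  moreover have "c \<noteq> 0"
    using calculation by auto
  then obtain k where "absv c = ppow k"
    using absv_eq_ppow by blast
  ultimately have "ppow (k + k) = ppow a3"
    unfolding ppow_add by simp
  then show ?thesis
    by auto
qed

lemma u_min_double_coset_bounds:
  assumes g: "mat c ** u_min x \<in> Kp_double_coset (cartan_diag a1 a2 (2 * m))"
    and a: "m \<ge> a1" "a1 \<ge> a2"
  shows "absv c = ppow m" "absv x \<le> ppow (m - a2)" "ppow (m - a2) \<le> max 1 (absv x)"
    and "ppow (2 * m - a1) * ppow (2 * m - a2) \<le> ppow m * ppow m * max 1 (absv x)"
proof -
  define D where "D = cartan_diag a1 a2 (2 * m)"
  define X where "X = max 1 (absv x)"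
  have "absv c * absv c = ppow m * ppow m"
    using u_min_double_coset_absv[OF g] by (simp flip: ppow_add)
  then show c: "absv c = ppow m"
    using power2_eq_iff_nonneg[of "absv c" "ppow m"] by (simp add: power2_eq_square)
  have D_entry: "absv (D $ i $ j) = (if i = j then ppow (if i = 0 then a1 else if i = 1 then a2
      else if i = 2 then 2 * m - a1 else 2 * m - a2) else 0)" for i j
    by (simp add: D_def cartan_diag_def diag4_def absv_p_powi)
  have "D \<in> Kp_double_coset (mat c ** u_min x)"
    using g by (simp add: D_def Kp_double_coset_sym)
  then have "absv (D $ 3 $ 3) \<le> absv c * X" "absv (minor2 D 2 3 2 3) \<le> absv c * absv c * X"
    unfolding X_def
    by (blast intro: Kp_double_coset_entries_le absv_mat_mult_u_min_entry
        Kp_double_coset_minor2_le absv_minor2_mat_mult_u_min)+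
  moreover have "minor2 D 2 3 2 3 = D $ 2 $ 2 * D $ 3 $ 3"
    unfolding D_def cartan_diag_def minor2_diag4 by (simp add: diag4_def)
  moreover have "ppow m * ppow (m - a2) = ppow (2 * m - a2)"
    by (simp flip: ppow_add)
  ultimately have "ppow m * ppow (m - a2) \<le> ppow m * X"
    and "ppow (2 * m - a1) * ppow (2 * m - a2) \<le> ppow m * ppow m * X"
    using D_entry[of 2 2] D_entry[of 3 3] c by (simp_all add: absv_mult)
  then show "ppow (m - a2) \<le> max 1 (absv x)"
    and "ppow (2 * m - a1) * ppow (2 * m - a2) \<le> ppow m * ppow m * max 1 (absv x)"
    by (simp_all add: X_def)
  have "absv (D $ i $ j) \<le> ppow (2 * m - a2)" for i j
    using a by (simp add: D_entry)
  then have "absv ((mat c ** u_min x) $ 0 $ 2) \<le> ppow (2 * m - a2)"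
    using g unfolding D_def by (rule Kp_double_coset_entries_le[rotated])
  then have "ppow m * absv x \<le> ppow m * ppow (m - a2)"
    by (simp add: mat_mult_u_min absv_mult c flip: ppow_add)
  then show "absv x \<le> ppow (m - a2)"
    by simp
qed

lemma u_min_in_double_coset_imp:
  assumes g: "mat c ** u_min x \<in> Kp_double_coset (cartan_diag a1 a2 (2 * m))"
    and a: "m \<ge> a1" "a1 \<ge> a2"
  shows "absv c = ppow m \<and> a1 = m \<and> (a2 = m \<longrightarrow> absv x \<le> 1) \<and> (a2 < m \<longrightarrow> absv x = ppow (m - a2))"
proof (cases "a2 = m")
  case True
  then show ?thesis
    using a u_min_double_coset_bounds[OF g a] by simp
next
  case False
  note bounds = u_min_double_coset_bounds[OF g a]
  have "1 < ppow (m - a2)"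
    using a False ppow_less_iff[of 0 "m - a2"] by simp
  then have x: "absv x = ppow (m - a2)" and "max 1 (absv x) = ppow (m - a2)"
    using bounds(2,3) by auto
  then have "ppow (2 * m - a1 + (2 * m - a2)) \<le> ppow (m + m + (m - a2))"
    using bounds(4) unfolding ppow_add by simp
  then show ?thesis
    using a bounds(1) x False by simp
qed

lemma unit_mult_p_powi:
  assumes "absv c = ppow m"
  obtains t where "absv t = 1" "c = t * of_nat p powi (- m)"
proof
  have "absv ((of_nat p :: 'a) powi (- m)) = ppow m"
    by (simp add: absv_p_powi)
  then show "absv (c / of_nat p powi (- m)) = 1" "c = c / of_nat p powi (- m) * of_nat p powi (- m)"
    using assms p_pos by (simp_all add: absv_divide)
qed

lemma u_min_in_double_coset_integral:
  assumes "absv c = ppow m" "absv x \<le> 1"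
  shows "mat c ** u_min x \<in> Kp_double_coset (cartan_diag m m (2 * m))"
proof -
  obtain t where t: "absv t = 1" "c = t * of_nat p powi (- m)"
    using unit_mult_p_powi[OF assms(1)] .
  define k where "k = mat t ** u_min x"
  have "absv (k $ i $ j) \<le> 1" for i j
    using absv_mat_mult_u_min_entry[of t x i j] t assms(2) by (simp add: k_def)
  then have "k \<in> Kp absv"
    using similitude_mult[OF similitude_mat similitude_u_min, of t x] t(1)
    by (intro Kp_intro[of k "t * t"]) (auto simp: k_def absv_mult)
  moreover have "cartan_diag m m (2 * m) = mat (of_nat p powi (- m))"
    by (simp add: cartan_diag_def diag4_scalar)
  moreover have "k ** mat (of_nat p powi (- m)) ** mat 1 = mat t ** (mat (of_nat p powi (- m)) ** u_min x)"
    by (simp add: k_def matrix_mul_assoc mat_matrix_mult_commute[of _ "u_min x"])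
  moreover have "\<dots> = mat c ** u_min x"
    using t(2) by (simp add: matrix_mul_assoc mat_mult_mat)
  ultimately show ?thesis
    unfolding Kp_double_coset_def using mat_1_in_Kp by force
qed

lemma u_min_in_double_coset_sphere:
  assumes "absv c = ppow m" "a2 < m" "absv x = ppow (m - a2)"
  shows "mat c ** u_min x \<in> Kp_double_coset (cartan_diag m a2 (2 * m))"
proof -
  define \<pi> where "\<pi> = (of_nat p :: 'a)"
  have "\<pi> \<noteq> 0"
    using p_pos by (simp add: \<pi>_def)
  obtain t where t: "absv t = 1" "c = t * \<pi> powi (- m)"
    using unit_mult_p_powi[OF assms(1)] unfolding \<pi>_def .
  define w where "w = \<pi> powi (m - a2)"
  have w: "absv w = ppow (a2 - m)" "ppow (a2 - m) \<le> 1"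
    using assms(2) ppow_le_iff[of "a2 - m" 0] by (simp_all add: w_def \<pi>_def absv_p_powi)
  have "ppow (m - a2) * ppow (a2 - m) = 1"
    by (simp flip: ppow_add)
  then have xw: "absv (x * w) = 1" and x_inv: "absv (1 / x) = ppow (a2 - m)"
    using assms(3) w by (simp_all add: absv_mult absv_divide field_simps)
  have "x \<noteq> 0" "w \<noteq> 0" "x * w \<noteq> 0"
    using assms(3) w xw by auto
  have "cartan_left t (x * w) w \<in> Kp absv"
    by (rule Kp_intro[OF _ similitude_cartan_left[OF \<open>x * w \<noteq> 0\<close>]])
      (use t w xw in \<open>auto simp: cartan_left_def absv_mult absv_divide\<close>)
  moreover have "cartan_right (1 / x) \<in> Kp absv"
    by (rule Kp_intro[OF _ similitude_cartan_right absv_1])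
      (use x_inv w in \<open>auto simp: cartan_right_def\<close>)
  moreover have D: "cartan_diag m a2 (2 * m)
      = diag4 (\<pi> powi (- m)) (\<pi> powi (- m) * w) (\<pi> powi (- m)) (\<pi> powi (- m) / w)"
    using \<open>\<pi> \<noteq> 0\<close> by (simp add: cartan_diag_def w_def \<pi>_def[symmetric] divide_inverse
        power_int_minus[symmetric] flip: power_int_add)
  have "mat c ** u_min x = cartan_left t (x * w) w ** cartan_diag m a2 (2 * m) ** cartan_right (1 / x)"
    unfolding D cartan_decomposition_u_min[OF \<open>x \<noteq> 0\<close> \<open>w \<noteq> 0\<close>] t(2) ..
  ultimately show ?thesis
    unfolding Kp_double_coset_def by blast
qed

lemma u_min_in_double_coset_iff:
  assumes "m \<ge> a1" "a1 \<ge> a2"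
  shows "mat c ** u_min x \<in> Kp_double_coset (cartan_diag a1 a2 (2 * m)) \<longleftrightarrow>
    absv c = ppow m \<and> a1 = m \<and> (a2 = m \<longrightarrow> absv x \<le> 1) \<and> (a2 < m \<longrightarrow> absv x = ppow (m - a2))"
  using u_min_in_double_coset_imp[OF _ assms] u_min_in_double_coset_integral[of c m x]
    u_min_in_double_coset_sphere[of c m a2 x] assms
  by (cases "a2 = m") auto

lemma u_min_in_congruence_iff:
  assumes "0 \<le> r" "r < 1"
  shows "mat c ** u_min x \<in> Kp_congruence r \<longleftrightarrow> absv (c - 1) \<le> r \<and> absv x \<le> r"
proof -
  have c: "absv c = 1" if "absv (c - 1) \<le> r"
    using absv_add_eq_left[of "c - 1" 1] that assms by simp
  show ?thesis
  proof
    assume g: "mat c ** u_min x \<in> Kp_congruence r"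
    then have E: "absv ((mat c ** u_min x) $ i $ j - mat 1 $ i $ j) \<le> r" for i j
      by (simp add: Kp_congruence_def)
    have "absv (c - 1) \<le> r" "absv (c * x) \<le> r"
      using E[of 0 0] E[of 0 2] unfolding mat_mult_u_min by (simp_all add: mat_def)
    then show "absv (c - 1) \<le> r \<and> absv x \<le> r"
      using c by (simp add: absv_mult)
  next
    assume cx: "absv (c - 1) \<le> r \<and> absv x \<le> r"
    then have "absv c = 1" "absv x \<le> 1"
      using c assms by auto
    then have "absv ((mat c ** u_min x) $ i $ j) \<le> 1" for i j
      using absv_mat_mult_u_min_entry[of c x i j] by simp
    then have "mat c ** u_min x \<in> Kp absv"
      using similitude_mult[OF similitude_mat similitude_u_min, of c x] \<open>absv c = 1\<close>
      by (intro Kp_intro[of _ "c * c"]) (auto simp: absv_mult)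
    moreover have "absv ((mat c ** u_min x) $ i $ j - mat 1 $ i $ j) \<le> r" for i j
      using cx assms \<open>absv c = 1\<close> unfolding mat_mult_u_min by (auto simp: mat_def absv_mult)
    ultimately show "mat c ** u_min x \<in> Kp_congruence r"
      by (simp add: Kp_congruence_def)
  qed
qed

end

section \<open>Haar measure on \<open>\<rat>\<^sub>p\<close> and the orbital integral\<close>

lemma emeasure_union_translates:
  fixes M :: "'a::ab_group_add measure" and t :: "nat \<Rightarrow> 'a"
  assumes invariant: "\<And>s A. A \<in> sets M \<Longrightarrow> emeasure M ((\<lambda>y. s + y) ` A) = emeasure M A"
    and translates: "\<And>s. (\<lambda>y. s + y) ` B \<in> sets M" and B: "B \<in> sets M"
    and disjoint: "disjoint_family_on (\<lambda>i. (\<lambda>y. t i + y) ` B) {..<N}"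
  shows "emeasure M (\<Union>i<N. (\<lambda>y. t i + y) ` B) = of_nat N * emeasure M B"
proof -
  have "emeasure M (\<Union>i<N. (\<lambda>y. t i + y) ` B) = (\<Sum>i<N. emeasure M ((\<lambda>y. t i + y) ` B))"
    using translates disjoint by (intro sum_emeasure[symmetric]) auto
  then show ?thesis
    using invariant[OF B] by simp
qed

lemma ennreal_inverse_mult_cancel:
  "0 < a \<Longrightarrow> 0 \<le> b \<Longrightarrow> ennreal (inverse a) * ennreal (a * b) = ennreal b"
  by (simp add: ennreal_mult[symmetric])

locale padic_haar = padic_completion p absv for p :: nat and absv :: "'a::field_char_0 \<Rightarrow> real" +
  fixes dx :: "'a measure"
  assumes haar_dx: "haar_Qp p absv dx"
begin

lemma space_dx [simp]: "space dx = UNIV"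
  and sets_dx: "sets dx = sigma_sets UNIV (Qp_balls p absv)"
  and emeasure_translate: "A \<in> sets dx \<Longrightarrow> emeasure dx ((\<lambda>y. t + y) ` A) = emeasure dx A"
  and emeasure_Zp: "emeasure dx {y. absv y \<le> 1} = 1"
  using haar_dx unfolding haar_Qp_def by blast+

lemma pball_in_sets [measurable]: "pball x e \<in> sets dx"
proof -
  have "pball x e \<in> Qp_balls p absv"
    unfolding Qp_balls_def pball_def by (intro CollectI exI[of _ x] exI[of _ "- e"]) (simp add: ppow_def)
  then show ?thesis
    unfolding sets_dx by (rule sigma_sets.Basic)
qed

lemma psphere_in_sets [measurable]: "psphere e \<in> sets dx"
  unfolding psphere_eq_Diff by measurable

lemma emeasure_pball_add:
  "emeasure dx (pball 0 (e + int n)) = of_nat (p ^ n) * emeasure dx (pball 0 e)"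
proof -
  define s where "s = (of_nat p :: 'a) powi (e + int n)"
  have s: "absv s = inverse (ppow (e + int n))"
    unfolding s_def absv_p_powi by (rule ppow_minus)
  have "emeasure dx (pball 0 (e + int n)) = emeasure dx (\<Union>j<p ^ n. (\<lambda>y. of_nat j / s + y) ` pball 0 e)"
    by (simp only: pball_eq_union_translates[OF s])
  also have "\<dots> = of_nat (p ^ n) * emeasure dx (pball 0 e)"
    by (rule emeasure_union_translates[OF emeasure_translate])
      (use disjoint_family_translates_pball[OF s] in \<open>auto simp: pball_translate\<close>)
  finally show ?thesis .
qed

lemma emeasure_pball: "emeasure dx (pball 0 e) = ennreal (ppow e)"
proof (cases "e \<ge> 0")
  case True
  then obtain n where "e = 0 + int n"
    by (metis add_0 nonneg_eq_int)
  then show ?thesis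
    using emeasure_pball_add[of 0 n]
    by (simp add: pball_0_0 emeasure_Zp ppow_of_nat ennreal_of_nat_eq_real_of_nat)
next
  case False
  then obtain n where n: "e = - int n"
    by (metis nonpos_int_cases not_le less_imp_le)
  then have "1 = ennreal (real p ^ n) * emeasure dx (pball 0 e)"
    using emeasure_pball_add[of e n] by (simp add: pball_0_0 emeasure_Zp ennreal_of_nat_eq_real_of_nat)
  moreover have "emeasure dx (pball 0 e)
      = ennreal (inverse (real p ^ n)) * (ennreal (real p ^ n) * emeasure dx (pball 0 e))"
    using p_pos by (simp add: ennreal_mult[symmetric] mult.assoc[symmetric])
  ultimately have "emeasure dx (pball 0 e) = ennreal (inverse (real p ^ n))"
    by simp
  then show ?thesis
    by (simp add: n ppow_minus_of_nat)
qed

lemma emeasure_psphere: "emeasure dx (psphere e) = ennreal ((1 - inverse (real p)) * ppow e)"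
proof -
  have "pball 0 (e - 1) \<subseteq> pball 0 e"
    by (rule pball_mono) simp
  then have "emeasure dx (psphere e) = ennreal (ppow e) - ennreal (ppow (e - 1))"
    unfolding psphere_eq_Diff by (subst emeasure_Diff) (auto simp: emeasure_pball)
  also have "ppow (e - 1) = inverse (real p) * ppow e"
    using ppow_add[of "-1" e] ppow_minus_of_nat[of 1] by simp
  finally show ?thesis
    using inverse_p_less_1 by (simp add: ennreal_minus[symmetric] algebra_simps)
qed

lemma indicator_psphere_absv:
  "ennreal (indicator (psphere e) y * absv y) = ennreal (ppow e) * indicator (psphere e) y"
  by (auto simp: indicator_def psphere_def)

lemma nn_integral_absv_psphere:
  "(\<integral>\<^sup>+ y. ennreal (indicator (psphere e) y * absv y) \<partial>dx) = ennreal ((1 - inverse (real p)) * ppow (2 * e))"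
proof -
  have sq: "ppow (2 * e) = ppow e * ppow e"
    using ppow_add[of e e] by (simp only: mult_2)
  have "(\<integral>\<^sup>+ y. ennreal (indicator (psphere e) y * absv y) \<partial>dx) = ennreal (ppow e) * emeasure dx (psphere e)"
    unfolding indicator_psphere_absv by (simp add: nn_integral_cmult_indicator)
  also have "\<dots> = ennreal (ppow e * ((1 - inverse (real p)) * ppow e))"
    unfolding emeasure_psphere by (rule ennreal_mult[symmetric]) (use inverse_p_less_1 in auto)
  also have "ppow e * ((1 - inverse (real p)) * ppow e) = (1 - inverse (real p)) * ppow (2 * e)"
    unfolding sq by (simp only: mult_ac)
  finally show ?thesis .
qed

text \<open>The point \<open>0\<close> lies on no sphere; it contributes \<open>0\<close> on both sides.\<close>

lemma indicator_pball_absv_sums: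
  "(\<lambda>i. ennreal (indicator (psphere (e - int i)) y * absv y)) sums ennreal (indicator (pball 0 e) y * absv y)"
proof (cases "y \<in> pball 0 e \<and> y \<noteq> 0")
  case True
  then obtain k where k: "absv y = ppow k"
    using absv_eq_ppow by blast
  with True have "k \<le> e"
    by (simp add: pball_def)
  have "y \<in> psphere (e - int i) \<longleftrightarrow> i = nat (e - k)" for i
    using \<open>k \<le> e\<close> by (simp add: psphere_def k) linarith
  then have "ennreal (indicator (psphere (e - int i)) y * absv y)
      = (if i = nat (e - k) then ennreal (absv y) else 0)" for i
    by (simp add: indicator_def)
  then show ?thesis
    using True sums_single[of "nat (e - k)" "\<lambda>_. ennreal (absv y)"] by simp
next
  case False
  have "y \<notin> psphere (e - int i)" for i
  proof
    assume "y \<in> psphere (e - int i)"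
    moreover have "ppow (e - int i) \<le> ppow e"
      by simp
    ultimately show False
      using False by (auto simp: psphere_def pball_def simp del: ppow_le_iff)
  qed
  then show ?thesis
    using False by (auto simp: indicator_def)
qed

lemma nn_integral_absv_pball:
  "(\<integral>\<^sup>+ y. ennreal (indicator (pball 0 e) y * absv y) \<partial>dx)
     = ennreal ((1 - inverse (real p)) * (ppow (2 * e) / (1 - inverse (real p ^ 2))))"
proof -
  define q where "q = inverse (real p ^ 2)"
  have q: "0 < q" "q < 1"
    using p_gt_1 by (simp_all add: q_def inverse_less_1_iff one_less_power)
  define a where "a i = (1 - inverse (real p)) * ppow (2 * e) * q ^ i" for i
  have a_nonneg: "a i \<ge> 0" for i
    using q inverse_p_less_1 by (simp add: a_def)
  have ppow_shift: "ppow (2 * (e - int i)) = ppow (2 * e) * q ^ i" for i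
  proof -
    have "ppow (2 * (e - int i)) = ppow (2 * e) * ppow (- int (2 * i))"
      using ppow_add[of "2 * e" "- int (2 * i)"] by (simp add: algebra_simps)
    also have "ppow (- int (2 * i)) = q ^ i"
      unfolding ppow_minus_of_nat by (simp add: q_def power_mult power_inverse)
    finally show ?thesis .
  qed
  have "(\<integral>\<^sup>+ y. ennreal (indicator (pball 0 e) y * absv y) \<partial>dx)
      = (\<integral>\<^sup>+ y. (\<Sum>i. ennreal (indicator (psphere (e - int i)) y * absv y)) \<partial>dx)"
    by (intro nn_integral_cong) (metis indicator_pball_absv_sums sums_unique)
  also have "\<dots> = (\<Sum>i. \<integral>\<^sup>+ y. ennreal (indicator (psphere (e - int i)) y * absv y) \<partial>dx)"
    unfolding indicator_psphere_absv by (rule nn_integral_suminf) measurable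
  also have "\<dots> = (\<Sum>i. ennreal (a i))"
    by (simp only: nn_integral_absv_psphere ppow_shift a_def mult.assoc)
  also have "\<dots> = ennreal (\<Sum>i. a i)"
    using q a_nonneg unfolding a_def by (intro suminf_ennreal2 summable_mult summable_geometric) auto
  also have "(\<Sum>i. a i) = (1 - inverse (real p)) * (ppow (2 * e) / (1 - q))"
    using q unfolding a_def by (simp add: suminf_mult suminf_geometric summable_geometric divide_inverse)
  finally show ?thesis
    by (simp add: q_def)
qed

lemma J_G_conj_invariant:
  assumes dk: "haar_Kp p absv dk"
    and conj: "\<And>k g. k \<in> Kp absv \<Longrightarrow> h (matrix_inv k ** g ** k) = h g"
  shows "J_G p absv dx dk c h
     = ennreal (inverse (1 - inverse (real p))) * (\<integral>\<^sup>+ x. ennreal (h (mat (of_rat c) ** u_min x) * absv x) \<partial>dx)"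
proof -
  have space: "space dk = Kp absv" and mass: "emeasure dk (Kp absv) = 1"
    using dk unfolding haar_Kp_def by auto
  have "(\<integral>\<^sup>+ k. ennreal (h (mat (of_rat c) ** matrix_inv k ** u_min x ** k) * absv x) \<partial>dk)
      = ennreal (h (mat (of_rat c) ** u_min x) * absv x)" for x
  proof -
    have "mat z ** matrix_inv k ** u ** k = matrix_inv k ** (mat z ** u) ** k" for z and k u :: "'a mat4"
      by (simp add: mat_matrix_mult_commute[of z "matrix_inv k"] matrix_mul_assoc)
    then have "(\<integral>\<^sup>+ k. ennreal (h (mat (of_rat c) ** matrix_inv k ** u_min x ** k) * absv x) \<partial>dk)
        = (\<integral>\<^sup>+ k. ennreal (h (mat (of_rat c) ** u_min x) * absv x) \<partial>dk)"
      by (intro nn_integral_cong) (simp add: space conj)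
    then show ?thesis
      by (simp add: nn_integral_const space mass)
  qed
  then show ?thesis
    unfolding J_G_def by simp
qed

lemma J_G_indicator:
  assumes dk: "haar_Kp p absv dk"
    and conj: "Kp_conj_invariant S"
    and S: "\<And>x. mat (of_rat c) ** u_min x \<in> S \<longleftrightarrow> x \<in> A"
  shows "J_G p absv dx dk c (indicator S)
     = ennreal (inverse (1 - inverse (real p))) * (\<integral>\<^sup>+ x. ennreal (indicator A x * absv x) \<partial>dx)"
proof -
  have "indicator S (matrix_inv k ** g ** k) = (indicator S g :: real)" if "k \<in> Kp absv" for k g
    using conj that by (simp add: Kp_conj_invariant_def indicator_def)
  moreover have "(\<integral>\<^sup>+ x. ennreal (indicator S (mat (of_rat c) ** u_min x) * absv x) \<partial>dx)
      = (\<integral>\<^sup>+ x. ennreal (indicator A x * absv x) \<partial>dx)"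
    using S by (intro nn_integral_cong) (simp add: indicator_def)
  ultimately show ?thesis
    using J_G_conj_invariant[OF dk] by simp
qed

lemma J_G_indicator_pball:
  assumes "haar_Kp p absv dk"
    and "Kp_conj_invariant S"
    and "\<And>x. mat (of_rat c) ** u_min x \<in> S \<longleftrightarrow> x \<in> pball 0 e"
  shows "J_G p absv dx dk c (indicator S) = ennreal (ppow (2 * e) / (1 - inverse (real p ^ 2)))"
proof -
  have "inverse (real p ^ 2) < 1"
    using p_gt_1 by (simp add: inverse_less_1_iff one_less_power)
  have "J_G p absv dx dk c (indicator S) = ennreal (inverse (1 - inverse (real p))) *
      ennreal ((1 - inverse (real p)) * (ppow (2 * e) / (1 - inverse (real p ^ 2))))"
    using J_G_indicator[OF assms] by (simp only: nn_integral_absv_pball)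
  also have "\<dots> = ennreal (ppow (2 * e) / (1 - inverse (real p ^ 2)))"
    using inverse_p_less_1 \<open>inverse (real p ^ 2) < 1\<close> by (intro ennreal_inverse_mult_cancel) auto
  finally show ?thesis .
qed

lemma J_G_indicator_psphere:
  assumes "haar_Kp p absv dk"
    and "Kp_conj_invariant S"
    and "\<And>x. mat (of_rat c) ** u_min x \<in> S \<longleftrightarrow> x \<in> psphere e"
  shows "J_G p absv dx dk c (indicator S) = ennreal (ppow (2 * e))"
proof -
  have "J_G p absv dx dk c (indicator S) = ennreal (inverse (1 - inverse (real p))) *
      ennreal ((1 - inverse (real p)) * ppow (2 * e))"
    using J_G_indicator[OF assms] by (simp only: nn_integral_absv_psphere)
  also have "\<dots> = ennreal (ppow (2 * e))"
    using inverse_p_less_1 by (intro ennreal_inverse_mult_cancel) auto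
  finally show ?thesis .
qed

lemma J_G_h_coset_odd:
  assumes dk: "haar_Kp p absv dk" and "odd a3"
  shows "J_G p absv dx dk c (h_coset p absv a1 a2 a3) = 0"
proof -
  have "mat (of_rat c) ** u_min x \<in> Kp_double_coset (cartan_diag a1 a2 a3) \<longleftrightarrow> x \<in> {}" for x
    using even_if_u_min_in_double_coset \<open>odd a3\<close> by blast
  then show ?thesis
    unfolding h_coset_eq_indicator by (subst J_G_indicator[OF dk Kp_conj_invariant_double_coset, where A = "{}"]) simp_all
qed

lemma J_G_h_coset_even:
  assumes dk: "haar_Kp p absv dk" and a: "m \<ge> a1" "a1 \<ge> a2"
  shows "J_G p absv dx dk c (h_coset p absv a1 a2 (2 * m)) =
    (if a1 = m \<and> a2 = m \<and> padic_abs_rat p c = ppow m then ennreal (inverse (1 - inverse (real p ^ 2)))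
     else if a1 = m \<and> a1 > a2 \<and> padic_abs_rat p c = ppow m then ennreal (ppow (2 * m - 2 * a2))
     else 0)"
proof -
  note conj = Kp_conj_invariant_double_coset
  have mem: "mat (of_rat c) ** u_min x \<in> Kp_double_coset (cartan_diag a1 a2 (2 * m)) \<longleftrightarrow>
      padic_abs_rat p c = ppow m \<and> a1 = m \<and> (a2 = m \<longrightarrow> absv x \<le> 1) \<and> (a2 < m \<longrightarrow> absv x = ppow (m - a2))"
    for x
    unfolding u_min_in_double_coset_iff[OF a] absv_of_rat ..
  consider "a1 = m \<and> a2 = m \<and> padic_abs_rat p c = ppow m"
    | "a1 = m \<and> a1 > a2 \<and> padic_abs_rat p c = ppow m"
    | "\<not> (a1 = m \<and> padic_abs_rat p c = ppow m)"
    using a by linarith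
  then show ?thesis
  proof cases
    case 1
    have "J_G p absv dx dk c (h_coset p absv a1 a2 (2 * m)) = ennreal (ppow (2 * 0) / (1 - inverse (real p ^ 2)))"
      unfolding h_coset_eq_indicator
      by (intro J_G_indicator_pball[OF dk conj]) (use 1 mem in \<open>simp add: pball_0_0\<close>)
    then show ?thesis
      using 1 by (simp add: inverse_eq_divide)
  next
    case 2
    have "J_G p absv dx dk c (h_coset p absv a1 a2 (2 * m)) = ennreal (ppow (2 * (m - a2)))"
      unfolding h_coset_eq_indicator
      by (intro J_G_indicator_psphere[OF dk conj]) (use 2 mem in \<open>auto simp: psphere_def\<close>)
    then show ?thesis
      using 2 by (simp add: algebra_simps)
  next
    case 3
    then show ?thesis
      unfolding h_coset_eq_indicator by (subst J_G_indicator[OF dk conj, where A = "{}"]) (auto simp: mem)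
  qed
qed

lemma J_G_h_level:
  assumes dk: "haar_Kp p absv dk" and "l \<ge> 1"
  shows "J_G p absv dx dk c (h_level p absv l) =
    (if padic_abs_rat p (c - 1) \<le> ppow (- int l)
     then ennreal (inverse (real p ^ (2 * l)) * inverse (1 - inverse (real p ^ 2))) else 0)"
proof -
  note conj = Kp_conj_invariant_congruence
  have "ppow (- int l) < 1"
    using \<open>l \<ge> 1\<close> ppow_less_iff[of "- int l" 0] by simp
  then have mem: "mat (of_rat c) ** u_min x \<in> Kp_congruence (ppow (- int l)) \<longleftrightarrow>
      padic_abs_rat p (c - 1) \<le> ppow (- int l) \<and> x \<in> pball 0 (- int l)" for x
    using absv_of_rat[of "c - 1"] by (simp add: u_min_in_congruence_iff pball_def of_rat_diff)
  show ?thesis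
  proof (cases "padic_abs_rat p (c - 1) \<le> ppow (- int l)")
    case True
    then have "J_G p absv dx dk c (h_level p absv l) = ennreal (ppow (2 * - int l) / (1 - inverse (real p ^ 2)))"
      unfolding h_level_eq_indicator by (intro J_G_indicator_pball[OF dk conj]) (simp add: mem)
    moreover have "ppow (2 * - int l) = inverse (real p ^ (2 * l))"
      using ppow_minus_of_nat[of "2 * l"] by (simp add: mult_minus_right)
    ultimately show ?thesis
      using True by (simp add: divide_inverse)
  next
    case False
    then show ?thesis
      unfolding h_level_eq_indicator by (subst J_G_indicator[OF dk conj, where A = "{}"]) (auto simp: mem)
  qed
qed

end

theorem lemma5p9:
  fixes p :: nat and absv :: "'a::field_char_0 \<Rightarrow> real"
    and dx :: "'a measure" and dk :: "'a mat4 measure" and c :: rat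
  assumes "prime p" and "is_Qp p absv" and "haar_Qp p absv dx" and "haar_Kp p absv dk"
    and "c \<noteq> 0"
  shows
    "(\<forall>a1 a2 a3 :: int. a3 \<ge> a1 \<and> a1 \<ge> a2 \<and> a2 \<ge> 0 \<and> odd a3 \<longrightarrow>
        J_G p absv dx dk c (h_coset p absv a1 a2 a3) = 0)
   \<and> (\<forall>m a1 a2 :: int. m \<ge> a1 \<and> a1 \<ge> a2 \<and> a2 \<ge> 0 \<longrightarrow>
        J_G p absv dx dk c (h_coset p absv a1 a2 (2 * m)) =
          (if a1 = m \<and> a2 = m \<and> padic_abs_rat p c = real p powr real_of_int m
             then ennreal (inverse (1 - inverse (real p ^ 2)))
           else if a1 = m \<and> a1 > a2 \<and> padic_abs_rat p c = real p powr real_of_int m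
             then ennreal (real p powr real_of_int (2 * m - 2 * a2))
           else 0))
   \<and> (\<forall>l :: nat. l \<ge> 1 \<longrightarrow>
        J_G p absv dx dk c (h_level p absv l) =
          (if padic_abs_rat p (c - 1) \<le> real p powr (- real l)
             then ennreal (inverse (real p ^ (2 * l)) * inverse (1 - inverse (real p ^ 2)))
           else 0))"
proof -
  interpret padic_haar p absv dx
    by unfold_locales (fact assms)+
  show ?thesis
    using J_G_h_coset_odd[OF assms(4)] J_G_h_coset_even[OF assms(4)] J_G_h_level[OF assms(4)]
    by (simp add: ppow_def)
qed

end
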